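(* Let $A$ be a $C^\infty$-ring and $I\le A$ an ideal. Then $g\in\sqrt[\infty]{I}$ if and only if the class of $g$ in $A/I$ is $\infty$-nilpotent.
   Context: A $C^\infty$-ring is a product-preserving functor from the category of $\mathbb R^n$ ($n\ge0$) and smooth maps to sets; ideals are ideals of the underlying $\mathbb R$-algebra; $\otimes_\infty$ is the coproduct of $C^\infty$-rings and $A\{a^{-1}\}$ is the universal $C^\infty$-ring inverting $a$; $\sqrt[\infty]{I}:=\{f\in A\mid (A/I)\{f^{-1}\}\cong0\}$. For $B$ a $C^\infty$-ring, $g\in B$ and $f\in B\otimes_\infty C^\infty(\mathbb R)$, $f(g)\in B$ denotes the image of $f$ under the morphism $B\otimes_\infty C^\infty(\mathbb R)\to B$ which is the identity on $B$ and sends the coordinate $x$ to $g$. An element $g\in B$ is $\infty$-nilpotent if there is $f\in B\otimes_\infty C^\infty(\mathbb R)$ with $f(g)=0$ whose image in $B\otimes_\infty C^\infty(\mathbb R\setminus\{0\})$ (under the map induced by restriction $C^\infty(\mathbb R)\to C^\infty(\mathbb R\setminus\{0\})$) is invertible. *)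

theory Defs
  imports "HOL-Analysis.Analysis"
begin

text \<open>A point of R^n is represented as a function nat => real of which only the
coordinates 0..n-1 matter.\<close>

definition pd :: "nat \<Rightarrow> ((nat \<Rightarrow> real) \<Rightarrow> real) \<Rightarrow> (nat \<Rightarrow> real) \<Rightarrow> real" where
  "pd i f x = deriv (\<lambda>t. f (x(i := t))) (x i)"

fun ipd :: "nat list \<Rightarrow> ((nat \<Rightarrow> real) \<Rightarrow> real) \<Rightarrow> (nat \<Rightarrow> real) \<Rightarrow> real" where
  "ipd [] f = f"
| "ipd (i # is) f = pd i (ipd is f)"

definition smooth_on :: "nat \<Rightarrow> ((nat \<Rightarrow> real) \<Rightarrow> bool) \<Rightarrow> ((nat \<Rightarrow> real) \<Rightarrow> real) \<Rightarrow> bool" where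
  "smooth_on n U f \<longleftrightarrow>
     (\<forall>x y. (\<forall>i<n. x i = y i) \<longrightarrow> f x = f y) \<and>
     (\<forall>is. set is \<subseteq> {..<n} \<longrightarrow>
        continuous_on {x. U x} (ipd is f) \<and>
        (\<forall>x i. U x \<and> i < n \<longrightarrow> (\<lambda>t. ipd is f (x(i := t))) differentiable (at (x i))))"

definition smooth :: "nat \<Rightarrow> ((nat \<Rightarrow> real) \<Rightarrow> real) \<Rightarrow> bool" where
  "smooth n f \<longleftrightarrow> smooth_on n (\<lambda>_. True) f"

text \<open>A product-preserving functor F from the category of the R^n and smooth maps to Set
is equivalently given by the set A = F(R) together with the operations
Phi n f : A^n -> A, f : R^n -> R smooth, subject to the projection and composition laws.\<close>

type_synonym 'a cops = "nat \<Rightarrow> ((nat \<Rightarrow> real) \<Rightarrow> real) \<Rightarrow> (nat \<Rightarrow> 'a) \<Rightarrow> 'a"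

definition cinf_ring :: "'a set \<Rightarrow> 'a cops \<Rightarrow> bool" where
  "cinf_ring A \<Phi> \<longleftrightarrow>
     (\<forall>n f a. smooth n f \<and> (\<forall>i<n. a i \<in> A) \<longrightarrow> \<Phi> n f a \<in> A) \<and>
     (\<forall>n f a b. (\<forall>i<n. a i = b i) \<longrightarrow> \<Phi> n f a = \<Phi> n f b) \<and>
     (\<forall>n f g a. (\<forall>x. f x = g x) \<longrightarrow> \<Phi> n f a = \<Phi> n g a) \<and>
     (\<forall>n i a. i < n \<and> (\<forall>j<n. a j \<in> A) \<longrightarrow> \<Phi> n (\<lambda>x. x i) a = a i) \<and>
     (\<forall>m n f g a. smooth m f \<and> (\<forall>j<m. smooth n (g j)) \<and> (\<forall>i<n. a i \<in> A) \<longrightarrow>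
        \<Phi> n (\<lambda>x. f (\<lambda>j. g j x)) a = \<Phi> m f (\<lambda>j. \<Phi> n (g j) a))"

definition pair2 :: "'a \<Rightarrow> 'a \<Rightarrow> nat \<Rightarrow> 'a" where
  "pair2 a b = (\<lambda>i. if i = 0 then a else b)"

definition czero :: "'a cops \<Rightarrow> 'a" where
  "czero \<Phi> = \<Phi> 0 (\<lambda>_. 0) (\<lambda>_. undefined)"

definition cadd :: "'a cops \<Rightarrow> 'a \<Rightarrow> 'a \<Rightarrow> 'a" where
  "cadd \<Phi> a b = \<Phi> 2 (\<lambda>x. x 0 + x 1) (pair2 a b)"

definition csub :: "'a cops \<Rightarrow> 'a \<Rightarrow> 'a \<Rightarrow> 'a" where
  "csub \<Phi> a b = \<Phi> 2 (\<lambda>x. x 0 - x 1) (pair2 a b)"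

definition cmul :: "'a cops \<Rightarrow> 'a \<Rightarrow> 'a \<Rightarrow> 'a" where
  "cmul \<Phi> a b = \<Phi> 2 (\<lambda>x. x 0 * x 1) (pair2 a b)"

text \<open>Ideal of the underlying commutative R-algebra (closure under scalars
follows from closure under multiplication by the constants of A).\<close>
definition cinf_ideal :: "'a set \<Rightarrow> 'a cops \<Rightarrow> 'a set \<Rightarrow> bool" where
  "cinf_ideal A \<Phi> I \<longleftrightarrow> I \<subseteq> A \<and> czero \<Phi> \<in> I \<and>
     (\<forall>a\<in>I. \<forall>b\<in>I. cadd \<Phi> a b \<in> I) \<and> (\<forall>a\<in>A. \<forall>b\<in>I. cmul \<Phi> a b \<in> I)"

definition qcls :: "'a set \<Rightarrow> 'a cops \<Rightarrow> 'a set \<Rightarrow> 'a \<Rightarrow> 'a set" where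
  "qcls A \<Phi> I a = {b \<in> A. csub \<Phi> b a \<in> I}"

definition qcarrier :: "'a set \<Rightarrow> 'a cops \<Rightarrow> 'a set \<Rightarrow> 'a set set" where
  "qcarrier A \<Phi> I = qcls A \<Phi> I ` A"

definition qops :: "'a set \<Rightarrow> 'a cops \<Rightarrow> 'a set \<Rightarrow> 'a set cops" where
  "qops A \<Phi> I n f X = qcls A \<Phi> I (\<Phi> n f (\<lambda>i. SOME a. a \<in> X i))"

text \<open>B is presented by the free C-infinity ring F(B) on the set B modulo the kernel J of
the evaluation F(B) -> B. Then B \<otimes> C^\<infinity>(U) = C^\<infinity>_fin(R^B x U)/(J), where
C^\<infinity>_fin(R^B x U) consists of smooth functions on R^B x U depending on finitely
many B-coordinates. Such functions are represented as maps ('b => real) => real => real.\<close>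

definition cp_adm :: "'b set \<Rightarrow> (real \<Rightarrow> bool) \<Rightarrow> (('b \<Rightarrow> real) \<Rightarrow> real \<Rightarrow> real) \<Rightarrow> bool" where
  "cp_adm B U F \<longleftrightarrow> (\<exists>k h c. (\<forall>i<k. c i \<in> B) \<and> smooth_on (Suc k) (\<lambda>x. U (x k)) h \<and>
      (\<forall>\<phi> t. U t \<longrightarrow> F \<phi> t = h (\<lambda>i. if i < k then \<phi> (c i) else t)))"

definition cp_ker :: "'b set \<Rightarrow> 'b cops \<Rightarrow> (('b \<Rightarrow> real) \<Rightarrow> real) \<Rightarrow> bool" where
  "cp_ker B \<Psi> G \<longleftrightarrow> (\<exists>m j d. (\<forall>i<m. d i \<in> B) \<and> smooth m j \<and>
      (\<forall>\<phi>. G \<phi> = j (\<lambda>i. \<phi> (d i))) \<and> \<Psi> m j d = czero \<Psi>)"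

definition cp_eq :: "'b set \<Rightarrow> 'b cops \<Rightarrow> (real \<Rightarrow> bool) \<Rightarrow>
    (('b \<Rightarrow> real) \<Rightarrow> real \<Rightarrow> real) \<Rightarrow> (('b \<Rightarrow> real) \<Rightarrow> real \<Rightarrow> real) \<Rightarrow> bool" where
  "cp_eq B \<Psi> U F F' \<longleftrightarrow> (\<exists>(N::nat) q G. (\<forall>l<N. cp_adm B U (q l) \<and> cp_ker B \<Psi> (G l)) \<and>
      (\<forall>\<phi> t. U t \<longrightarrow> F \<phi> t - F' \<phi> t = (\<Sum>l<N. q l \<phi> t * G l \<phi>)))"

definition cp_invertible :: "'b set \<Rightarrow> 'b cops \<Rightarrow> (real \<Rightarrow> bool) \<Rightarrow>
    (('b \<Rightarrow> real) \<Rightarrow> real \<Rightarrow> real) \<Rightarrow> bool" where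
  "cp_invertible B \<Psi> U F \<longleftrightarrow>
     (\<exists>F'. cp_adm B U F' \<and> cp_eq B \<Psi> U (\<lambda>\<phi> t. F \<phi> t * F' \<phi> t) (\<lambda>\<phi> t. 1))"

text \<open>f(g): the image of f under B \<otimes>_\<infinity> C^\<infinity>(R) -> B, identity on B, x |-> g.\<close>
definition cp_eval_is :: "'b set \<Rightarrow> 'b cops \<Rightarrow> (('b \<Rightarrow> real) \<Rightarrow> real \<Rightarrow> real) \<Rightarrow> 'b \<Rightarrow> 'b \<Rightarrow> bool" where
  "cp_eval_is B \<Psi> F g v \<longleftrightarrow> (\<exists>k h c. (\<forall>i<k. c i \<in> B) \<and> smooth (Suc k) h \<and>
      (\<forall>\<phi> t. F \<phi> t = h (\<lambda>i. if i < k then \<phi> (c i) else t)) \<and>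
      \<Psi> (Suc k) h (c(k := g)) = v)"

text \<open>B{b^{-1}} = (B \<otimes>_\<infinity> C^\<infinity>(R)) / (x b - 1). Equality of elements there:\<close>
definition loc_eq :: "'b set \<Rightarrow> 'b cops \<Rightarrow> 'b \<Rightarrow>
    (('b \<Rightarrow> real) \<Rightarrow> real \<Rightarrow> real) \<Rightarrow> (('b \<Rightarrow> real) \<Rightarrow> real \<Rightarrow> real) \<Rightarrow> bool" where
  "loc_eq B \<Psi> b F F' \<longleftrightarrow> (\<exists>H. cp_adm B (\<lambda>_. True) H \<and>
      cp_eq B \<Psi> (\<lambda>_. True) (\<lambda>\<phi> t. F \<phi> t - H \<phi> t * (t * \<phi> b - 1)) F')"

text \<open>B{b^{-1}} is isomorphic to the zero C-infinity ring iff it has exactly one element.\<close>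
definition loc_trivial :: "'b set \<Rightarrow> 'b cops \<Rightarrow> 'b \<Rightarrow> bool" where
  "loc_trivial B \<Psi> b \<longleftrightarrow> (\<forall>F F'. cp_adm B (\<lambda>_. True) F \<and> cp_adm B (\<lambda>_. True) F' \<longrightarrow>
      loc_eq B \<Psi> b F F')"

definition inf_radical :: "'a set \<Rightarrow> 'a cops \<Rightarrow> 'a set \<Rightarrow> 'a set" where
  "inf_radical A \<Phi> I = {f \<in> A. loc_trivial (qcarrier A \<Phi> I) (qops A \<Phi> I) (qcls A \<Phi> I f)}"

definition inf_nilpotent :: "'b set \<Rightarrow> 'b cops \<Rightarrow> 'b \<Rightarrow> bool" where
  "inf_nilpotent B \<Psi> g \<longleftrightarrow> (\<exists>F. cp_adm B (\<lambda>_. True) F \<and> cp_eval_is B \<Psi> F g (czero \<Psi>) \<and>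
      cp_invertible B \<Psi> (\<lambda>t. t \<noteq> 0) F)"

end

theory Submission
  imports Defs "HOL-Computational_Algebra.Polynomial"
begin

text \<open>
  Equality in \<open>B \<otimes>\<^sub>\<infinity> C\<^sup>\<infinity>(U)\<close> is congruence modulo the ideal generated by the kernel \<open>J\<close> of
  \<open>F(B) \<rightarrow> B\<close>, so \<open>B{b\<^sup>-\<^sup>1}\<close> is trivial iff \<open>1 - H (x b - 1)\<close> lies in that ideal for some \<open>H\<close>.

  If \<open>f(b) = 0\<close> and \<open>f f' = 1\<close> away from \<open>x = 0\<close>, take a smooth \<open>\<rho>\<close> vanishing on \<open>u \<le> 1/2\<close> with
  \<open>\<rho>(u) \<equiv> 1\<close> modulo \<open>u - 1\<close>. Then \<open>\<rho>(x b) \<equiv> 1\<close> modulo \<open>x b - 1\<close>, while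
  \<open>\<rho>(x b) = \<rho>(x b) f'(b) f(b) - \<rho>(x b) (f f' - 1)(b)\<close> lies in the ideal: \<open>f(b) \<in> J\<close>, and the
  cutoff makes substituting \<open>b\<close> into \<open>f'\<close>, which is only defined away from \<open>0\<close>, harmless.
  Conversely, from \<open>1 \<equiv> H (x b - 1)\<close> the function \<open>f = x - b\<close> has \<open>f(b) = 0\<close> and the inverse
  \<open>-H(1/x)/x\<close> away from \<open>0\<close>. For the quotient \<open>A/I\<close> only \<open>(x\<^sub>1 - x\<^sub>0)(c, c) = 0\<close> is needed.

  Smoothness of the functions involved rests on a coinduction principle: a family of
  functions whose partial derivatives stay in the family consists of smooth functions.
\<close>

section \<open>Smooth functions on open subsets of \<open>\<real>\<^sup>n\<close>\<close>

definition depends_below :: "nat \<Rightarrow> ((nat \<Rightarrow> real) \<Rightarrow> real) \<Rightarrow> bool" where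
  "depends_below n f \<longleftrightarrow> (\<forall>x y. (\<forall>i<n. x i = y i) \<longrightarrow> f x = f y)"

lemma depends_belowD: "depends_below n f \<Longrightarrow> (\<And>i. i < n \<Longrightarrow> x i = y i) \<Longrightarrow> f x = f y"
  unfolding depends_below_def by blast

lemma depends_below_const: "depends_below n (\<lambda>_. c)"
  unfolding depends_below_def by simp

lemma depends_below_binop:
  "depends_below n f \<Longrightarrow> depends_below n g \<Longrightarrow> depends_below n (\<lambda>x. h (f x) (g x))"
  unfolding depends_below_def by metis

lemma depends_below_comp: "depends_below n f \<Longrightarrow> depends_below n (\<lambda>x. h (f x))"
  unfolding depends_below_def by metis

lemma depends_below_pd:
  assumes "depends_below n f" "i < n"
  shows "depends_below n (pd i f)"
  unfolding depends_below_def pd_def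
proof (intro allI impI)
  fix x y :: "nat \<Rightarrow> real"
  assume "\<forall>j<n. x j = y j"
  then have "(\<lambda>t. f (x(i := t))) = (\<lambda>t. f (y(i := t)))" and "x i = y i"
    using assms(2) by (auto intro!: ext depends_belowD[OF assms(1)])
  then show "deriv (\<lambda>t. f (x(i := t))) (x i) = deriv (\<lambda>t. f (y(i := t))) (y i)"
    by simp
qed

lemma smooth_on_depends_below: "smooth_on n U f \<Longrightarrow> depends_below n f"
  unfolding smooth_on_def depends_below_def by blast

lemma smooth_on_continuous_on: "smooth_on n U f \<Longrightarrow> continuous_on {x. U x} f"
  unfolding smooth_on_def by (metis empty_subsetI empty_set ipd.simps(1))

lemma ipd_append: "ipd (is @ [i]) f = ipd is (pd i f)"
  by (induction "is") auto

lemma smooth_on_pd: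
  assumes f: "smooth_on n U f" and "i < n"
  shows "smooth_on n U (pd i f)"
proof -
  have "set (is @ [i]) \<subseteq> {..<n}" if "set is \<subseteq> {..<n}" for "is"
    using that \<open>i < n\<close> by auto
  then show ?thesis
    using f depends_below_pd[OF smooth_on_depends_below[OF f] \<open>i < n\<close>]
    unfolding smooth_on_def depends_below_def ipd_append[symmetric] by blast
qed

lemma slice_eventually_eq:
  fixes x :: "nat \<Rightarrow> real"
  assumes "open {x. U x}" "U x" "\<And>y. U y \<Longrightarrow> f y = g y"
  shows "eventually (\<lambda>t. f (x(i := t)) = g (x(i := t))) (nhds (x i))"
proof -
  have "continuous_on UNIV (\<lambda>t::real. x(i := t))"
  proof (intro continuous_on_coordinatewise_then_product)
    fix j show "continuous_on UNIV (\<lambda>t. (x(i := t)) j)"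
      by (cases "j = i") auto
  qed
  then have "open ((\<lambda>t. x(i := t)) -` {x. U x})"
    using assms(1) open_vimage by blast
  then show ?thesis
    unfolding eventually_nhds using assms(2,3) by (intro exI[of _ "(\<lambda>t. x(i := t)) -` {x. U x}"]) auto
qed

lemma slice_DERIV_cong:
  fixes x :: "nat \<Rightarrow> real"
  assumes "open {x. U x}" "U x" "\<And>y. U y \<Longrightarrow> f y = g y"
  shows "((\<lambda>t. f (x(i := t))) has_real_derivative D) (at (x i)) \<longleftrightarrow>
         ((\<lambda>t. g (x(i := t))) has_real_derivative D) (at (x i))"
  using slice_eventually_eq[OF assms] by (rule DERIV_cong_ev[OF refl _ refl])

lemma pd_cong:
  fixes x :: "nat \<Rightarrow> real"
  assumes "open {x. U x}" "U x" "\<And>y. U y \<Longrightarrow> f y = g y"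
  shows "pd i f x = pd i g x"
  unfolding pd_def by (rule deriv_cong_ev[OF slice_eventually_eq[OF assms] refl])

definition pderivs_in ::
    "nat \<Rightarrow> ((nat \<Rightarrow> real) \<Rightarrow> bool) \<Rightarrow> ((nat \<Rightarrow> real) \<Rightarrow> real) set \<Rightarrow> ((nat \<Rightarrow> real) \<Rightarrow> real) \<Rightarrow> bool" where
  "pderivs_in n U S f \<longleftrightarrow> depends_below n f \<and> continuous_on {x. U x} f \<and>
     (\<forall>i<n. \<exists>f'\<in>S. \<forall>x. U x \<longrightarrow> ((\<lambda>t. f (x(i := t))) has_real_derivative f' x) (at (x i)))"

lemma pderivs_in_mono: "pderivs_in n U S f \<Longrightarrow> S \<subseteq> T \<Longrightarrow> pderivs_in n U T f"
  unfolding pderivs_in_def by blast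

lemma smooth_on_DERIV_pd:
  assumes "smooth_on n U f" "U x" "i < n"
  shows "((\<lambda>t. f (x(i := t))) has_real_derivative pd i f x) (at (x i))"
  using assms unfolding smooth_on_def pd_def
  by (metis DERIV_deriv_iff_real_differentiable empty_set empty_subsetI ipd.simps(1))

lemma smooth_on_pderivs_in: "smooth_on n U f \<Longrightarrow> pderivs_in n U {g. smooth_on n U g} f"
  unfolding pderivs_in_def
  by (blast intro: smooth_on_pd smooth_on_DERIV_pd smooth_on_depends_below smooth_on_continuous_on)

lemma pderivs_in_ipd:
  assumes U: "open {x. U x}" and S: "\<And>g. g \<in> S \<Longrightarrow> pderivs_in n U S g"
    and "set is \<subseteq> {..<n}" and "g \<in> S"
  shows "\<exists>g'\<in>S. \<forall>x. U x \<longrightarrow> ipd is g x = g' x"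
  using assms(3,4)
proof (induction "is")
  case (Cons i "is")
  then obtain g1 where "g1 \<in> S" and g1: "\<And>x. U x \<Longrightarrow> ipd is g x = g1 x" by auto
  moreover have "i < n"
    using Cons.prems(1) by simp
  ultimately obtain g2 where "g2 \<in> S"
    and g2: "\<And>x. U x \<Longrightarrow> ((\<lambda>t. g1 (x(i := t))) has_real_derivative g2 x) (at (x i))"
    using S unfolding pderivs_in_def by blast
  have "pd i (ipd is g) x = g2 x" if "U x" for x
  proof -
    have "pd i (ipd is g) x = pd i g1 x"
      by (rule pd_cong[OF U \<open>U x\<close> g1])
    also have "\<dots> = g2 x"
      unfolding pd_def by (rule DERIV_imp_deriv[OF g2[OF \<open>U x\<close>]])
    finally show ?thesis .
  qed
  with \<open>g2 \<in> S\<close> show ?case by auto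
qed auto

lemma smooth_on_coinduct:
  assumes U: "open {x. U x}" and S: "\<And>g. g \<in> S \<Longrightarrow> pderivs_in n U S g" and "f \<in> S"
  shows "smooth_on n U f"
proof -
  have "continuous_on {x. U x} (ipd is f) \<and>
      (\<forall>x i. U x \<and> i < n \<longrightarrow> (\<lambda>t. ipd is f (x(i := t))) differentiable at (x i))"
    if "set is \<subseteq> {..<n}" for "is"
  proof -
    obtain g where "g \<in> S" and g: "\<And>x. U x \<Longrightarrow> ipd is f x = g x"
      using pderivs_in_ipd[OF U S \<open>set is \<subseteq> {..<n}\<close> \<open>f \<in> S\<close>] by blast
    then have "continuous_on {x. U x} (ipd is f)"
      using S continuous_on_cong[of "{x. U x}" "{x. U x}" "ipd is f" g]
      unfolding pderivs_in_def by simp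
    moreover have "(\<lambda>t. ipd is f (x(i := t))) differentiable at (x i)" if "U x" "i < n" for x i
    proof -
      obtain g' where "((\<lambda>t. g (x(i := t))) has_real_derivative g' x) (at (x i))"
        using S[OF \<open>g \<in> S\<close>] \<open>U x\<close> \<open>i < n\<close> unfolding pderivs_in_def by blast
      then show ?thesis
        using slice_DERIV_cong[of U x "ipd is f" g, OF U \<open>U x\<close> g]
        unfolding real_differentiable_def by blast
    qed
    ultimately show ?thesis
      by blast
  qed
  moreover have "depends_below n f"
    using S[OF \<open>f \<in> S\<close>] unfolding pderivs_in_def by blast
  ultimately show ?thesis
    unfolding smooth_on_def depends_below_def by blast
qed

lemma pderivs_in_add:
  assumes "pderivs_in n U S f" "pderivs_in n U S g"
    and "\<And>f' g'. f' \<in> S \<Longrightarrow> g' \<in> S \<Longrightarrow> (\<lambda>x. f' x + g' x) \<in> S"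
  shows "pderivs_in n U S (\<lambda>x. f x + g x)"
  unfolding pderivs_in_def
proof (intro conjI allI impI)
  fix i assume "i < n"
  then obtain f' g' where "f' \<in> S" "g' \<in> S"
    and "\<And>x. U x \<Longrightarrow> ((\<lambda>t. f (x(i := t))) has_real_derivative f' x) (at (x i))"
    and "\<And>x. U x \<Longrightarrow> ((\<lambda>t. g (x(i := t))) has_real_derivative g' x) (at (x i))"
    using assms(1,2) unfolding pderivs_in_def by meson
  then show "\<exists>h\<in>S. \<forall>x. U x \<longrightarrow>
      ((\<lambda>t. f (x(i := t)) + g (x(i := t))) has_real_derivative h x) (at (x i))"
    using assms(3) by (intro bexI[of _ "\<lambda>x. f' x + g' x"]) (auto intro: DERIV_add)
qed (use assms(1,2) in \<open>auto simp: pderivs_in_def intro: depends_below_binop continuous_on_add\<close>)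

lemma pderivs_in_mult:
  assumes "pderivs_in n U S f" "pderivs_in n U S g"
    and "\<And>f' g'. f' \<in> S \<Longrightarrow> g' \<in> S \<Longrightarrow> (\<lambda>x. f x * g' x + f' x * g x) \<in> S"
  shows "pderivs_in n U S (\<lambda>x. f x * g x)"
  unfolding pderivs_in_def
proof (intro conjI allI impI)
  fix i assume "i < n"
  then obtain f' g' where "f' \<in> S" "g' \<in> S"
    and f': "\<And>x. U x \<Longrightarrow> ((\<lambda>t. f (x(i := t))) has_real_derivative f' x) (at (x i))"
    and g': "\<And>x. U x \<Longrightarrow> ((\<lambda>t. g (x(i := t))) has_real_derivative g' x) (at (x i))"
    using assms(1,2) unfolding pderivs_in_def by meson
  have "((\<lambda>t. f (x(i := t)) * g (x(i := t))) has_real_derivative f x * g' x + f' x * g x) (at (x i))"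
    if "U x" for x
    using DERIV_mult'[OF f'[OF that] g'[OF that]] by simp
  then show "\<exists>h\<in>S. \<forall>x. U x \<longrightarrow>
      ((\<lambda>t. f (x(i := t)) * g (x(i := t))) has_real_derivative h x) (at (x i))"
    using assms(3)[OF \<open>f' \<in> S\<close> \<open>g' \<in> S\<close>]
    by (intro bexI[of _ "\<lambda>x. f x * g' x + f' x * g x"] allI impI) auto
qed (use assms(1,2) in \<open>auto simp: pderivs_in_def intro: depends_below_binop continuous_on_mult\<close>)

inductive_set smooth_alg ::
    "nat \<Rightarrow> ((nat \<Rightarrow> real) \<Rightarrow> bool) \<Rightarrow> ((nat \<Rightarrow> real) \<Rightarrow> real) set \<Rightarrow> ((nat \<Rightarrow> real) \<Rightarrow> real) set"
  for n U G where
  smooth: "smooth_on n U f \<Longrightarrow> f \<in> smooth_alg n U G"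
| gen: "f \<in> G \<Longrightarrow> f \<in> smooth_alg n U G"
| add: "f \<in> smooth_alg n U G \<Longrightarrow> g \<in> smooth_alg n U G \<Longrightarrow> (\<lambda>x. f x + g x) \<in> smooth_alg n U G"
| mult: "f \<in> smooth_alg n U G \<Longrightarrow> g \<in> smooth_alg n U G \<Longrightarrow> (\<lambda>x. f x * g x) \<in> smooth_alg n U G"

lemma smooth_alg_smooth_on:
  assumes U: "open {x. U x}" and G: "\<And>g. g \<in> G \<Longrightarrow> pderivs_in n U (smooth_alg n U G) g"
    and "f \<in> smooth_alg n U G"
  shows "smooth_on n U f"
proof (rule smooth_on_coinduct[OF U _ \<open>f \<in> smooth_alg n U G\<close>])
  fix g assume "g \<in> smooth_alg n U G"
  then show "pderivs_in n U (smooth_alg n U G) g"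
  proof induction
    case (smooth f)
    then show ?case
      by (rule pderivs_in_mono[OF smooth_on_pderivs_in]) (auto intro: smooth_alg.smooth)
  next
    case (add f g)
    then show ?case by (intro pderivs_in_add) (auto intro: smooth_alg.add)
  next
    case (mult f g)
    then show ?case by (intro pderivs_in_mult) (auto intro: smooth_alg.add smooth_alg.mult)
  qed (rule G)
qed

lemma smooth_on_add:
  "open {x. U x} \<Longrightarrow> smooth_on n U f \<Longrightarrow> smooth_on n U g \<Longrightarrow> smooth_on n U (\<lambda>x. f x + g x)"
  by (rule smooth_alg_smooth_on[where G = "{}"]) (auto intro: smooth_alg.intros)

lemma smooth_on_mult:
  "open {x. U x} \<Longrightarrow> smooth_on n U f \<Longrightarrow> smooth_on n U g \<Longrightarrow> smooth_on n U (\<lambda>x. f x * g x)"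
  by (rule smooth_alg_smooth_on[where G = "{}"]) (auto intro: smooth_alg.intros)

lemma smooth_on_const:
  assumes U: "open {x. U x}"
  shows "smooth_on n U (\<lambda>_. c)"
proof (rule smooth_on_coinduct[OF U, where S = "range (\<lambda>c _. c)"])
  fix g assume "g \<in> range (\<lambda>(c::real) (_::nat \<Rightarrow> real). c)"
  moreover have "\<exists>f'\<in>range (\<lambda>c _. c). \<forall>x. U x \<longrightarrow> ((\<lambda>t. c) has_real_derivative f' x) (at (x i))"
    for c i
    by (rule bexI[of _ "\<lambda>_. 0"]) auto
  ultimately show "pderivs_in n U (range (\<lambda>c _. c)) g"
    by (auto simp: pderivs_in_def depends_below_const)
qed auto

lemma smooth_on_proj:
  assumes U: "open {x. U x}" and "j < n"
  shows "smooth_on n U (\<lambda>x. x j)"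
proof (rule smooth_alg_smooth_on[OF U, where G = "{\<lambda>x. x j}"])
  have "\<exists>f'\<in>smooth_alg n U {\<lambda>x. x j}.
      \<forall>x. U x \<longrightarrow> ((\<lambda>t. (x(i := t)) j) has_real_derivative f' x) (at (x i))" for i
  proof (rule bexI[of _ "\<lambda>_. if i = j then 1 else 0"])
    show "(\<lambda>_. if i = j then 1 else 0) \<in> smooth_alg n U {\<lambda>x. x j}"
      by (intro smooth_alg.smooth smooth_on_const[OF U])
  qed (cases "i = j"; simp)
  moreover have "continuous_on {x. U x} (\<lambda>x. x j)"
    by (rule continuous_on_subset[OF continuous_on_product_coordinates]) simp
  ultimately show "pderivs_in n U (smooth_alg n U {\<lambda>x. x j}) g" if "g \<in> {\<lambda>x. x j}" for g
    using that \<open>j < n\<close> by (auto simp: pderivs_in_def depends_below_def)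
qed (auto intro: smooth_alg.gen)

lemma smooth_on_scale: "open {x. U x} \<Longrightarrow> smooth_on n U f \<Longrightarrow> smooth_on n U (\<lambda>x. c * f x)"
  by (rule smooth_on_mult[OF _ smooth_on_const])

lemma smooth_on_diff:
  "open {x. U x} \<Longrightarrow> smooth_on n U f \<Longrightarrow> smooth_on n U g \<Longrightarrow> smooth_on n U (\<lambda>x. f x - g x)"
  using smooth_on_add[of U n f "\<lambda>x. -1 * g x"] smooth_on_scale[of U n g "-1"] by simp

definition smooth1_on :: "real set \<Rightarrow> (real \<Rightarrow> real) \<Rightarrow> bool" where
  "smooth1_on W w \<longleftrightarrow> (\<exists>S. w \<in> S \<and> (\<forall>a\<in>S. \<exists>a'\<in>S. \<forall>s\<in>W. (a has_real_derivative a' s) (at s)))"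

lemma smooth1_onD:
  assumes "smooth1_on W w"
  obtains w' where "smooth1_on W w'" "\<And>s. s \<in> W \<Longrightarrow> (w has_real_derivative w' s) (at s)"
  using assms unfolding smooth1_on_def by metis

lemma smooth1_on_continuous_on: "smooth1_on W w \<Longrightarrow> continuous_on W w"
  by (metis smooth1_onD DERIV_isCont continuous_at_imp_continuous_on)

lemma smooth_on_comp1:
  assumes U: "open {x. U x}" and w: "smooth1_on W w" and g: "smooth_on n U g"
    and gW: "\<And>x. U x \<Longrightarrow> g x \<in> W"
  shows "smooth_on n U (\<lambda>x. w (g x))"
proof -
  define G where "G = {\<lambda>x. a (g x) | a. smooth1_on W a}"
  have "pderivs_in n U (smooth_alg n U G) F" if "F \<in> G" for F
  proof -
    obtain a where a: "smooth1_on W a" and F: "F = (\<lambda>x. a (g x))"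
      using \<open>F \<in> G\<close> unfolding G_def by blast
    obtain a' where a': "smooth1_on W a'" "\<And>s. s \<in> W \<Longrightarrow> (a has_real_derivative a' s) (at s)"
      using smooth1_onD[OF a] by blast
    have "continuous_on {x. U x} F"
      unfolding F using gW
      by (intro continuous_on_compose2[OF smooth1_on_continuous_on[OF a] smooth_on_continuous_on[OF g]])
         auto
    moreover have "\<exists>f'\<in>smooth_alg n U G.
        \<forall>x. U x \<longrightarrow> ((\<lambda>t. F (x(i := t))) has_real_derivative f' x) (at (x i))" if "i < n" for i
    proof -
      obtain g' where "smooth_on n U g'"
        and g': "\<And>x. U x \<Longrightarrow> ((\<lambda>t. g (x(i := t))) has_real_derivative g' x) (at (x i))"
        using smooth_on_pderivs_in[OF g] \<open>i < n\<close> unfolding pderivs_in_def by blast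
      have "((\<lambda>t. F (x(i := t))) has_real_derivative a' (g x) * g' x) (at (x i))" if "U x" for x
      proof -
        have "(a has_real_derivative a' (g x)) (at (g (x(i := x i))))"
          using a'(2) gW[OF that] by simp
        then show ?thesis
          unfolding F by (rule DERIV_chain2[OF _ g'[OF that]])
      qed
      moreover have "(\<lambda>x. a' (g x)) \<in> G"
        using a'(1) unfolding G_def by blast
      then have "(\<lambda>x. a' (g x) * g' x) \<in> smooth_alg n U G"
        by (rule smooth_alg.mult[OF smooth_alg.gen smooth_alg.smooth[OF \<open>smooth_on n U g'\<close>]])
      ultimately show ?thesis
        by (intro bexI[of _ "\<lambda>x. a' (g x) * g' x"] allI impI)
    qed
    ultimately show ?thesis
      using depends_below_comp[OF smooth_on_depends_below[OF g]]
      unfolding pderivs_in_def F by blast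
  qed
  moreover have "(\<lambda>x. w (g x)) \<in> smooth_alg n U G"
    using w unfolding G_def by (blast intro: smooth_alg.gen)
  ultimately show ?thesis
    by (rule smooth_alg_smooth_on[OF U])
qed

lemma continuous_on_subst_coord:
  assumes "continuous_on {x. U x} (\<lambda>x. w (x k))"
  shows "continuous_on {x. U x} (\<lambda>x. x(k := w (x k)))"
proof (intro continuous_on_coordinatewise_then_product)
  fix j
  show "continuous_on {x. U x} (\<lambda>x. (x(k := w (x k))) j)"
    using assms
    by (cases "j = k") (auto intro: continuous_on_subset[OF continuous_on_product_coordinates])
qed

lemma DERIV_slice_subst_coord:
  fixes x :: "nat \<Rightarrow> real"
  assumes h: "((\<lambda>s. h ((x(k := w (x k)))(i := s))) has_real_derivative D) (at ((x(k := w (x k))) i))"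
    and w: "(w has_real_derivative w') (at (x k))"
  shows "((\<lambda>t. h ((x(i := t))(k := w ((x(i := t)) k)))) has_real_derivative
      D * (if i = k then w' else 1)) (at (x i))"
proof (cases "i = k")
  case True
  then have "((\<lambda>s. h ((x(k := w (x k)))(k := s))) has_real_derivative D) (at (w (x k)))"
    using h by simp
  from DERIV_chain2[OF this w] show ?thesis
    using True by simp
next
  case False
  then show ?thesis
    using h by (simp add: fun_upd_twist)
qed

lemma smooth_on_subst_coord:
  assumes U: "open {x. U x}" and w: "smooth1_on W w" and h: "smooth_on n V h" and "k < n"
    and UV: "\<And>x. U x \<Longrightarrow> x k \<in> W \<and> V (x(k := w (x k)))"
  shows "smooth_on n U (\<lambda>x. h (x(k := w (x k))))"
proof -
  define G where "G = {\<lambda>x. h' (x(k := w (x k))) | h'. smooth_on n V h'}"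
  obtain w' where "smooth1_on W w'" and w': "\<And>s. s \<in> W \<Longrightarrow> (w has_real_derivative w' s) (at s)"
    using smooth1_onD[OF w] by blast
  have w'_smooth: "smooth_on n U (\<lambda>x. if i = k then w' (x k) else 1)" for i
    using UV smooth_on_comp1[OF U \<open>smooth1_on W w'\<close> smooth_on_proj[OF U \<open>k < n\<close>]]
    by (cases "i = k") (auto simp: smooth_on_const[OF U])
  have "continuous_on {x. U x} (\<lambda>x. w (x k))"
    by (rule smooth_on_continuous_on[OF smooth_on_comp1[OF U w smooth_on_proj[OF U \<open>k < n\<close>]]])
       (use UV in blast)
  then have subst_cont: "continuous_on {x. U x} (\<lambda>x. x(k := w (x k)))"
    by (rule continuous_on_subst_coord)
  have "pderivs_in n U (smooth_alg n U G) F" if "F \<in> G" for F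
  proof -
    obtain h' where h': "smooth_on n V h'" and F: "F = (\<lambda>x. h' (x(k := w (x k))))"
      using \<open>F \<in> G\<close> unfolding G_def by blast
    have "depends_below n F"
      unfolding F depends_below_def
      by (auto intro!: depends_belowD[OF smooth_on_depends_below[OF h']])
    moreover have "continuous_on {x. U x} F"
      unfolding F using UV
      by (intro continuous_on_compose2[OF smooth_on_continuous_on[OF h'] subst_cont]) auto
    moreover have "\<exists>f'\<in>smooth_alg n U G.
        \<forall>x. U x \<longrightarrow> ((\<lambda>t. F (x(i := t))) has_real_derivative f' x) (at (x i))" if "i < n" for i
    proof -
      obtain h'' where "smooth_on n V h''"
        and h'': "\<And>y. V y \<Longrightarrow> ((\<lambda>t. h' (y(i := t))) has_real_derivative h'' y) (at (y i))"
        using smooth_on_pderivs_in[OF h'] \<open>i < n\<close> unfolding pderivs_in_def by blast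
      have "((\<lambda>t. F (x(i := t))) has_real_derivative
          h'' (x(k := w (x k))) * (if i = k then w' (x k) else 1)) (at (x i))" if "U x" for x
        using DERIV_slice_subst_coord[OF h''[OF UV[OF that, THEN conjunct2]] w'[OF UV[OF that, THEN conjunct1]]]
        unfolding F .
      moreover have "(\<lambda>x. h'' (x(k := w (x k)))) \<in> G"
        using \<open>smooth_on n V h''\<close> unfolding G_def by blast
      then have "(\<lambda>x. h'' (x(k := w (x k))) * (if i = k then w' (x k) else 1)) \<in> smooth_alg n U G"
        by (rule smooth_alg.mult[OF smooth_alg.gen smooth_alg.smooth[OF w'_smooth]])
      ultimately show ?thesis
        by (intro bexI[of _ "\<lambda>x. h'' (x(k := w (x k))) * (if i = k then w' (x k) else 1)"] allI impI)
    qed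
    ultimately show ?thesis
      unfolding pderivs_in_def by blast
  qed
  moreover have "(\<lambda>x. h (x(k := w (x k)))) \<in> smooth_alg n U G"
    using h unfolding G_def by (blast intro: smooth_alg.gen)
  ultimately show ?thesis
    by (rule smooth_alg_smooth_on[OF U])
qed

lemma
  assumes "depends_below m g"
  shows reindex_upd_mapped: "inj_on \<sigma> {..<m} \<Longrightarrow> j < m \<Longrightarrow> \<sigma> j = i \<Longrightarrow>
      g ((x(i := t)) \<circ> \<sigma>) = g ((x \<circ> \<sigma>)(j := t))"
    and reindex_upd_unmapped: "i \<notin> \<sigma> ` {..<m} \<Longrightarrow> g ((x(i := t)) \<circ> \<sigma>) = g (x \<circ> \<sigma>)"
  by (rule depends_belowD[OF assms], force simp: inj_on_def)+

lemma smooth_on_reindex: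
  assumes V: "open {x. V x}" and f: "smooth_on m V f"
    and \<sigma>: "\<And>j. j < m \<Longrightarrow> \<sigma> j < n" and inj: "inj_on \<sigma> {..<m}"
  shows "smooth_on n (\<lambda>x. V (x \<circ> \<sigma>)) (\<lambda>x. f (x \<circ> \<sigma>))"
proof -
  have reindex_cont: "continuous_on UNIV (\<lambda>x::nat \<Rightarrow> real. x \<circ> \<sigma>)"
    by (intro continuous_on_coordinatewise_then_product) (simp add: o_def)
  then have U: "open {x. V (x \<circ> \<sigma>)}"
    using open_vimage[OF V] by (simp add: vimage_def)
  define G where "G = {\<lambda>x. g (x \<circ> \<sigma>) | g. smooth_on m V g}"
  have "pderivs_in n (\<lambda>x. V (x \<circ> \<sigma>)) (smooth_alg n (\<lambda>x. V (x \<circ> \<sigma>)) G) F" if "F \<in> G" for F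
  proof -
    obtain g where g: "smooth_on m V g" and F: "F = (\<lambda>x. g (x \<circ> \<sigma>))"
      using \<open>F \<in> G\<close> unfolding G_def by blast
    note g_dep = smooth_on_depends_below[OF g]
    have "depends_below n F"
      unfolding F depends_below_def using \<sigma>
      by (auto intro!: depends_belowD[OF g_dep])
    moreover have "continuous_on {x. V (x \<circ> \<sigma>)} F"
      unfolding F
      by (rule continuous_on_compose2[OF smooth_on_continuous_on[OF g]
            continuous_on_subset[OF reindex_cont]]) auto
    moreover have "\<exists>f'\<in>smooth_alg n (\<lambda>x. V (x \<circ> \<sigma>)) G. \<forall>x. V (x \<circ> \<sigma>) \<longrightarrow>
        ((\<lambda>t. F (x(i := t))) has_real_derivative f' x) (at (x i))" for i
    proof (cases "i \<in> \<sigma> ` {..<m}")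
      case True
      then obtain j where "j < m" "\<sigma> j = i" by auto
      have "((\<lambda>t. F (x(i := t))) has_real_derivative pd j g (x \<circ> \<sigma>)) (at (x i))"
        if "V (x \<circ> \<sigma>)" for x
        using smooth_on_DERIV_pd[OF g that \<open>j < m\<close>] \<open>\<sigma> j = i\<close>
        unfolding F reindex_upd_mapped[OF g_dep inj \<open>j < m\<close> \<open>\<sigma> j = i\<close>] by (simp add: o_def)
      moreover have "(\<lambda>x. pd j g (x \<circ> \<sigma>)) \<in> G"
        using smooth_on_pd[OF g \<open>j < m\<close>] unfolding G_def by blast
      ultimately show ?thesis
        by (intro bexI[OF _ smooth_alg.gen] allI impI)
    next
      case False
      then show ?thesis
        unfolding F reindex_upd_unmapped[OF g_dep False]
        by (intro bexI[of _ "\<lambda>_. 0"] allI impI smooth_alg.smooth smooth_on_const[OF U]) simp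
    qed
    ultimately show ?thesis
      unfolding pderivs_in_def by blast
  qed
  moreover have "(\<lambda>x. f (x \<circ> \<sigma>)) \<in> smooth_alg n (\<lambda>x. V (x \<circ> \<sigma>)) G"
    using f unfolding G_def by (blast intro: smooth_alg.gen)
  ultimately show ?thesis
    by (rule smooth_alg_smooth_on[OF U])
qed

lemma smooth_on_mono_arity: "open {x. V x} \<Longrightarrow> smooth_on m V f \<Longrightarrow> m \<le> n \<Longrightarrow> smooth_on n V f"
  using smooth_on_reindex[of V m f id n] by simp

lemma smooth_on_glue:
  assumes U1: "open {x. U1 x}" and U2: "open {x. U2 x}"
    and "smooth_on n U1 f1" "smooth_on n U2 f2"
    and "\<And>x. U1 x \<Longrightarrow> f x = f1 x" "\<And>x. U2 x \<Longrightarrow> f x = f2 x" "depends_below n f"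
  shows "smooth_on n (\<lambda>x. U1 x \<or> U2 x) f"
proof -
  define S where "S = {F. depends_below n F \<and> (\<exists>g1 g2. smooth_on n U1 g1 \<and> smooth_on n U2 g2 \<and>
      (\<forall>x. U1 x \<longrightarrow> F x = g1 x) \<and> (\<forall>x. U2 x \<longrightarrow> F x = g2 x))}"
  have U: "open {x. U1 x \<or> U2 x}"
    using open_Un[OF U1 U2] by (simp add: Collect_disj_eq)
  have "pderivs_in n (\<lambda>x. U1 x \<or> U2 x) S F" if "F \<in> S" for F
  proof -
    obtain g1 g2 where F: "depends_below n F" and g1: "smooth_on n U1 g1" and g2: "smooth_on n U2 g2"
      and e1: "\<And>x. U1 x \<Longrightarrow> F x = g1 x" and e2: "\<And>x. U2 x \<Longrightarrow> F x = g2 x"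
      using \<open>F \<in> S\<close> unfolding S_def by blast
    have "continuous_on {x. U1 x} F" "continuous_on {x. U2 x} F"
      using smooth_on_continuous_on[OF g1] smooth_on_continuous_on[OF g2] e1 e2
        continuous_on_cong[of "{x. U1 x}" "{x. U1 x}" F g1]
        continuous_on_cong[of "{x. U2 x}" "{x. U2 x}" F g2]
      by simp_all
    then have "continuous_on {x. U1 x \<or> U2 x} F"
      using continuous_on_open_Un[OF U1 U2] by (simp add: Collect_disj_eq)
    moreover have "pd i F \<in> S" if "i < n" for i
      using depends_below_pd[OF F that] smooth_on_pd[OF g1 that] smooth_on_pd[OF g2 that]
        pd_cong[of U1 _ F g1, OF U1 _ e1] pd_cong[of U2 _ F g2, OF U2 _ e2]
      unfolding S_def by blast
    moreover have "((\<lambda>t. F (x(i := t))) has_real_derivative pd i F x) (at (x i))"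
      if "U1 x \<or> U2 x" "i < n" for x i
      using that smooth_on_DERIV_pd[OF g1 _ \<open>i < n\<close>] smooth_on_DERIV_pd[OF g2 _ \<open>i < n\<close>]
        slice_DERIV_cong[of U1 _ F g1, OF U1 _ e1] slice_DERIV_cong[of U2 _ F g2, OF U2 _ e2]
        pd_cong[of U1 _ F g1, OF U1 _ e1] pd_cong[of U2 _ F g2, OF U2 _ e2]
      by metis
    ultimately show ?thesis
      using F unfolding pderivs_in_def by blast
  qed
  moreover have "f \<in> S"
    using assms(3-) unfolding S_def by blast
  ultimately show ?thesis
    by (rule smooth_on_coinduct[OF U])
qed

section \<open>A flat function and a smooth cutoff\<close>

lemma tendsto_poly_times_exp_neg: "((\<lambda>y. poly P y * exp (- y)) \<longlongrightarrow> (0::real)) at_top"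
proof -
  have "poly P y * exp (- y) = (\<Sum>i\<le>degree P. coeff P i * (y ^ i / exp y))" for y :: real
    by (simp add: poly_altdef sum_distrib_right exp_minus divide_inverse mult.assoc)
  moreover have "((\<lambda>y. \<Sum>i\<le>degree P. coeff P i * (y ^ i / exp y)) \<longlongrightarrow> (0::real)) at_top"
    by (intro tendsto_null_sum tendsto_mult_right_zero tendsto_power_div_exp_0)
  ultimately show ?thesis
    by simp
qed

definition flat_poly :: "real poly \<Rightarrow> real \<Rightarrow> real" where
  "flat_poly P s = (if 0 < s then poly P (inverse s) * exp (- inverse s) else 0)"

definition flat_dpoly :: "real poly \<Rightarrow> real poly" where
  "flat_dpoly P = [:0, 0, 1:] * (P - pderiv P)"

lemma flat_poly_DERIV_pos:
  assumes "0 < s"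
  shows "(flat_poly P has_real_derivative flat_poly (flat_dpoly P) s) (at s)"
proof -
  have "((\<lambda>s. poly P (inverse s)) has_real_derivative
      poly (pderiv P) (inverse s) * - (inverse s ^ Suc (Suc 0))) (at s)"
    by (rule DERIV_chain2[OF poly_DERIV DERIV_inverse]) (use assms in simp)
  moreover have "((\<lambda>s. exp (- inverse s)) has_real_derivative
      exp (- inverse s) * - (- (inverse s ^ Suc (Suc 0)))) (at s)"
    by (rule DERIV_chain2[OF DERIV_exp DERIV_minus[OF DERIV_inverse]]) (use assms in simp)
  ultimately have D: "((\<lambda>s. poly P (inverse s) * exp (- inverse s)) has_real_derivative
      poly (pderiv P) (inverse s) * - (inverse s ^ Suc (Suc 0)) * exp (- inverse s)
      + exp (- inverse s) * - (- (inverse s ^ Suc (Suc 0))) * poly P (inverse s)) (at s)"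
    by (rule DERIV_mult)
  have val: "poly (pderiv P) (inverse s) * - (inverse s ^ Suc (Suc 0)) * exp (- inverse s)
      + exp (- inverse s) * - (- (inverse s ^ Suc (Suc 0))) * poly P (inverse s) =
      flat_poly (flat_dpoly P) s"
    using assms by (simp add: flat_poly_def flat_dpoly_def poly_mult algebra_simps)
  have "(flat_poly P has_real_derivative
      poly (pderiv P) (inverse s) * - (inverse s ^ Suc (Suc 0)) * exp (- inverse s)
      + exp (- inverse s) * - (- (inverse s ^ Suc (Suc 0))) * poly P (inverse s)) (at s)"
    by (rule has_field_derivative_transform_within_open[OF D, of "{0<..}"])
       (use assms in \<open>auto simp: flat_poly_def\<close>)
  then show ?thesis
    unfolding val .
qed

lemma flat_poly_DERIV_neg:
  assumes "s < 0"
  shows "(flat_poly P has_real_derivative flat_poly (flat_dpoly P) s) (at s)"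
proof -
  have "(flat_poly P has_real_derivative 0) (at s)"
    by (rule has_field_derivative_transform_within_open[where f = "\<lambda>_. 0" and S = "{..<0}"])
       (use assms in \<open>auto simp: flat_poly_def\<close>)
  then show ?thesis
    using assms by (simp add: flat_poly_def)
qed

lemma flat_poly_DERIV_zero: "(flat_poly P has_real_derivative flat_poly (flat_dpoly P) 0) (at 0)"
proof -
  have "((\<lambda>y. (flat_poly P y - flat_poly P 0) / (y - 0)) \<longlongrightarrow> 0) (at (0::real))"
  proof (rule filterlim_split_at)
    show "((\<lambda>y. (flat_poly P y - flat_poly P 0) / (y - 0)) \<longlongrightarrow> 0) (at_left (0::real))"
      by (rule tendsto_eventually, rule eventually_mono[of "\<lambda>y. y < 0"])
         (simp_all add: flat_poly_def eventually_at_filter)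
  next
    have "((\<lambda>y. poly (pCons 0 P) (inverse y) * exp (- inverse y)) \<longlongrightarrow> 0) (at_right (0::real))"
      by (rule filterlim_compose[OF tendsto_poly_times_exp_neg filterlim_inverse_at_top_right])
    moreover have "\<forall>\<^sub>F y in at_right 0. poly (pCons 0 P) (inverse y) * exp (- inverse y) =
        (flat_poly P y - flat_poly P 0) / (y - 0)"
      by (rule eventually_mono[OF eventually_at_right_less])
         (simp add: flat_poly_def divide_inverse mult_ac)
    ultimately show "((\<lambda>y. (flat_poly P y - flat_poly P 0) / (y - 0)) \<longlongrightarrow> 0) (at_right (0::real))"
      by (rule Lim_transform_eventually)
  qed
  then show ?thesis
    by (simp add: has_field_derivative_iff flat_poly_def)
qed

lemma flat_poly_DERIV: "(flat_poly P has_real_derivative flat_poly (flat_dpoly P) s) (at s)"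
  using flat_poly_DERIV_pos flat_poly_DERIV_neg flat_poly_DERIV_zero
  by (cases s "0::real" rule: linorder_cases) auto

lemma smooth1_on_flat_poly: "smooth1_on W (flat_poly P)"
  unfolding smooth1_on_def using flat_poly_DERIV by (intro exI[of _ "range flat_poly"]) blast

lemma DERIV_const_times_inverse_power:
  assumes "s \<noteq> 0"
  shows "((\<lambda>s. c * inverse s ^ p) has_real_derivative - c * real p * inverse s ^ Suc p) (at s)"
proof -
  have "((\<lambda>s. inverse s ^ p) has_real_derivative
      real p * inverse s ^ (p - Suc 0) * - (inverse s ^ Suc (Suc 0))) (at s)"
    by (rule DERIV_chain2[OF DERIV_pow DERIV_inverse[OF assms]])
  then have "((\<lambda>s. c * inverse s ^ p) has_real_derivative
      c * (real p * inverse s ^ (p - Suc 0) * - (inverse s ^ Suc (Suc 0)))) (at s)"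
    by (rule DERIV_cmult)
  moreover have "c * (real p * inverse s ^ (p - Suc 0) * - (inverse s ^ Suc (Suc 0))) =
      - c * real p * inverse s ^ Suc p"
    by (cases p) (simp_all add: algebra_simps power_Suc)
  ultimately show ?thesis
    by (simp only:)
qed

lemma smooth1_on_inverse: "smooth1_on (-{0}) inverse"
  unfolding smooth1_on_def
proof (intro exI[of _ "{\<lambda>s. c * inverse s ^ p | c p. True}"] conjI ballI)
  show "inverse \<in> {\<lambda>s::real. c * inverse s ^ p | c p. True}"
    by (intro CollectI exI[of _ 1] exI[of _ "Suc 0"]) auto
  fix a assume "a \<in> {\<lambda>s::real. c * inverse s ^ p | c p. True}"
  then obtain c p where "a = (\<lambda>s. c * inverse s ^ p)" by blast
  moreover have "(\<lambda>s. - c * real p * inverse s ^ Suc p) \<in> {\<lambda>s::real. c * inverse s ^ p | c p. True}"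
    by blast
  ultimately show "\<exists>a'\<in>{\<lambda>s::real. c * inverse s ^ p | c p. True}.
      \<forall>s\<in>- {0}. (a has_real_derivative a' s) (at s)"
    using DERIV_const_times_inverse_power by (intro bexI) auto
qed

definition flat_exp :: "real \<Rightarrow> real" where
  "flat_exp = flat_poly 1"

lemma flat_exp_eq: "flat_exp s = (if 0 < s then exp (- inverse s) else 0)"
  by (simp add: flat_exp_def flat_poly_def)

lemma flat_exp_ge:
  assumes "1/2 \<le> s"
  shows "1/9 \<le> flat_exp s"
proof -
  have "exp (2::real) = exp 1 * exp 1"
    by (simp flip: exp_add)
  also have "\<dots> \<le> 3 * 3"
    using exp_le by (intro mult_mono) auto
  finally have "1/9 \<le> exp (-2::real)"
    by (simp add: exp_minus field_simps)
  also have "\<dots> \<le> exp (- inverse s)"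
    using le_imp_inverse_le[OF assms] by simp
  finally show ?thesis
    using assms by (simp add: flat_exp_eq)
qed

text \<open>\<open>cutoff u - 1 = (u - 1) / cutoff_denom u\<close>, and the flat factor makes \<open>cutoff\<close> vanish
  for \<open>u \<le> 1/2\<close>.\<close>
definition cutoff_denom :: "real \<Rightarrow> real" where
  "cutoff_denom u = 1 - u + 16 * u * flat_exp (u - 1/2)"

definition cutoff :: "real \<Rightarrow> real" where
  "cutoff u = 16 * u * flat_exp (u - 1/2) * inverse (cutoff_denom u)"

lemma cutoff_denom_pos: "0 < cutoff_denom u"
proof (cases "u < 1")
  case True
  have "0 \<le> u * flat_exp (u - 1/2)"
    by (cases "u \<le> 1/2") (auto simp: flat_exp_eq)
  then show ?thesis
    using True unfolding cutoff_denom_def by simp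
next
  case False
  then have "16 * u * (1/9) \<le> 16 * u * flat_exp (u - 1/2)"
    by (intro mult_left_mono flat_exp_ge) auto
  then show ?thesis
    using False unfolding cutoff_denom_def by linarith
qed

lemma cutoff_eq_0: "u \<le> 1/2 \<Longrightarrow> cutoff u = 0"
  by (simp add: cutoff_def flat_exp_eq)

lemma cutoff_eq: "cutoff u = 1 + (u - 1) * inverse (cutoff_denom u)"
  using cutoff_denom_pos[of u] unfolding cutoff_def
  by (simp add: field_simps cutoff_denom_def)

lemma smooth_on_flat_exp_comp:
  "open {x. U x} \<Longrightarrow> smooth_on n U g \<Longrightarrow> smooth_on n U (\<lambda>x. flat_exp (g x - 1/2))"
  unfolding flat_exp_def
  by (rule smooth_on_comp1[OF _ smooth1_on_flat_poly smooth_on_diff[OF _ _ smooth_on_const]]) auto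

lemma smooth_on_cutoff_denom_comp:
  assumes U: "open {x. U x}" and g: "smooth_on n U g"
  shows "smooth_on n U (\<lambda>x. cutoff_denom (g x))"
proof -
  have "smooth_on n U (\<lambda>x. (1 - g x) + (16 * g x) * flat_exp (g x - 1/2))"
    by (intro smooth_on_add[OF U] smooth_on_diff[OF U] smooth_on_mult[OF U] smooth_on_scale[OF U]
        smooth_on_const[OF U] smooth_on_flat_exp_comp[OF U] g)
  then show ?thesis
    unfolding cutoff_denom_def by (simp add: mult.assoc)
qed

lemma smooth_on_inverse_cutoff_denom_comp:
  assumes U: "open {x. U x}" and g: "smooth_on n U g"
  shows "smooth_on n U (\<lambda>x. inverse (cutoff_denom (g x)))"
proof (rule smooth_on_comp1[OF U smooth1_on_inverse smooth_on_cutoff_denom_comp[OF U g]])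
  show "cutoff_denom (g x) \<in> -{0}" for x
    using cutoff_denom_pos[of "g x"] by auto
qed

lemma smooth_on_cutoff_comp:
  assumes U: "open {x. U x}" and g: "smooth_on n U g"
  shows "smooth_on n U (\<lambda>x. cutoff (g x))"
proof -
  have "smooth_on n U (\<lambda>x. (16 * g x) * flat_exp (g x - 1/2) * inverse (cutoff_denom (g x)))"
    by (intro smooth_on_mult[OF U] smooth_on_scale[OF U] smooth_on_flat_exp_comp[OF U]
        smooth_on_inverse_cutoff_denom_comp[OF U] g)
  then show ?thesis
    unfolding cutoff_def by (simp add: mult.assoc)
qed

section \<open>Admissible functions on \<open>\<real>\<^sup>B \<times> U\<close>\<close>

lemma open_Collect_coord: "open {t::real. U t} \<Longrightarrow> open {x::nat \<Rightarrow> real. U (x k)}"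
  using open_vimage[OF _ continuous_on_product_coordinates, of "{t. U t}" k] by (simp add: vimage_def)

lemma open_Collect_nonzero: "open {s::real. s \<noteq> 0}"
  by (rule open_Collect_neq[OF continuous_on_id continuous_on_const])

lemma cp_adm_const: "open {t. U t} \<Longrightarrow> cp_adm B U (\<lambda>\<phi> t. c)"
  unfolding cp_adm_def
  by (intro exI[of _ 0] exI[of _ "\<lambda>_. c"]) (simp add: smooth_on_const open_Collect_coord)

lemma cp_presentation_reindex:
  assumes U: "open {t. U t}" and g: "smooth_on (Suc k') (\<lambda>x. U (x k')) g"
    and \<sigma>: "\<And>i. i < k' \<Longrightarrow> \<sigma> i < k \<and> c (\<sigma> i) = c' i" and "\<sigma> k' = k" and "inj_on \<sigma> {..<Suc k'}"
  shows "smooth_on (Suc k) (\<lambda>x. U (x k)) (\<lambda>x. g (x \<circ> \<sigma>))"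
    and "g (\<lambda>i. if i < k' then \<phi> (c' i) else t) = g ((\<lambda>i. if i < k then \<phi> (c i) else t) \<circ> \<sigma>)"
proof -
  have "\<sigma> i < Suc k" if "i < Suc k'" for i
    using that \<sigma> \<open>\<sigma> k' = k\<close> by (cases "i = k'") (auto simp: less_Suc_eq)
  then show "smooth_on (Suc k) (\<lambda>x. U (x k)) (\<lambda>x. g (x \<circ> \<sigma>))"
    using smooth_on_reindex[OF open_Collect_coord[OF U] g _ \<open>inj_on \<sigma> {..<Suc k'}\<close>]
      \<open>\<sigma> k' = k\<close> by simp
  show "g (\<lambda>i. if i < k' then \<phi> (c' i) else t) = g ((\<lambda>i. if i < k then \<phi> (c i) else t) \<circ> \<sigma>)"
    using \<sigma> \<open>\<sigma> k' = k\<close>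
    by (intro depends_belowD[OF smooth_on_depends_below[OF g]]) (auto simp: less_Suc_eq)
qed

lemma cp_adm_merge:
  assumes U: "open {t. U t}" and "cp_adm B U F1" and "cp_adm B U F2"
  obtains k c h1 h2 where "\<forall>i<k. c i \<in> B"
    and "smooth_on (Suc k) (\<lambda>x. U (x k)) h1" and "smooth_on (Suc k) (\<lambda>x. U (x k)) h2"
    and "\<And>\<phi> t. U t \<Longrightarrow> F1 \<phi> t = h1 (\<lambda>i. if i < k then \<phi> (c i) else t)"
    and "\<And>\<phi> t. U t \<Longrightarrow> F2 \<phi> t = h2 (\<lambda>i. if i < k then \<phi> (c i) else t)"
proof -
  obtain k1 g1 c1 where c1: "\<forall>i<k1. c1 i \<in> B" and g1: "smooth_on (Suc k1) (\<lambda>x. U (x k1)) g1"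
    and F1: "\<And>\<phi> t. U t \<Longrightarrow> F1 \<phi> t = g1 (\<lambda>i. if i < k1 then \<phi> (c1 i) else t)"
    using \<open>cp_adm B U F1\<close> unfolding cp_adm_def by blast
  obtain k2 g2 c2 where c2: "\<forall>i<k2. c2 i \<in> B" and g2: "smooth_on (Suc k2) (\<lambda>x. U (x k2)) g2"
    and F2: "\<And>\<phi> t. U t \<Longrightarrow> F2 \<phi> t = g2 (\<lambda>i. if i < k2 then \<phi> (c2 i) else t)"
    using \<open>cp_adm B U F2\<close> unfolding cp_adm_def by blast
  define c where "c = (\<lambda>i. if i < k1 then c1 i else c2 (i - k1))"
  define \<sigma>1 where "\<sigma>1 = (\<lambda>i::nat. if i < k1 then i else k1 + k2)"
  define \<sigma>2 where "\<sigma>2 = (\<lambda>i::nat. i + k1)"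
  have \<sigma>1: "\<And>i. i < k1 \<Longrightarrow> \<sigma>1 i < k1 + k2 \<and> c (\<sigma>1 i) = c1 i" "\<sigma>1 k1 = k1 + k2"
    "inj_on \<sigma>1 {..<Suc k1}"
    by (auto simp: \<sigma>1_def c_def inj_on_def)
  have \<sigma>2: "\<And>i. i < k2 \<Longrightarrow> \<sigma>2 i < k1 + k2 \<and> c (\<sigma>2 i) = c2 i" "\<sigma>2 k2 = k1 + k2"
    "inj_on \<sigma>2 {..<Suc k2}"
    by (auto simp: \<sigma>2_def c_def inj_on_def)
  note r1 = cp_presentation_reindex[OF U g1 \<sigma>1] and r2 = cp_presentation_reindex[OF U g2 \<sigma>2]
  show ?thesis
  proof (rule that[OF _ r1(1) r2(1)])
    show "\<forall>i<k1 + k2. c i \<in> B"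
      using c1 c2 by (auto simp: c_def)
    show "F1 \<phi> t = g1 ((\<lambda>i. if i < k1 + k2 then \<phi> (c i) else t) \<circ> \<sigma>1)"
      "F2 \<phi> t = g2 ((\<lambda>i. if i < k1 + k2 then \<phi> (c i) else t) \<circ> \<sigma>2)" if "U t" for \<phi> t
      using F1[OF that] F2[OF that] r1(2) r2(2) by simp_all
  qed
qed

lemma cp_adm_binop:
  assumes U: "open {t. U t}" and "cp_adm B U F1" and "cp_adm B U F2"
    and op: "\<And>k h1 h2. smooth_on (Suc k) (\<lambda>x. U (x k)) h1 \<Longrightarrow> smooth_on (Suc k) (\<lambda>x. U (x k)) h2 \<Longrightarrow>
      smooth_on (Suc k) (\<lambda>x. U (x k)) (\<lambda>x. f (h1 x) (h2 x))"
  shows "cp_adm B U (\<lambda>\<phi> t. f (F1 \<phi> t) (F2 \<phi> t))"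
proof -
  obtain k c h1 h2 where "\<forall>i<k. c i \<in> B"
    and "smooth_on (Suc k) (\<lambda>x. U (x k)) h1" "smooth_on (Suc k) (\<lambda>x. U (x k)) h2"
    and "\<And>\<phi> t. U t \<Longrightarrow> F1 \<phi> t = h1 (\<lambda>i. if i < k then \<phi> (c i) else t)"
    and "\<And>\<phi> t. U t \<Longrightarrow> F2 \<phi> t = h2 (\<lambda>i. if i < k then \<phi> (c i) else t)"
    by (rule cp_adm_merge[OF assms(1-3)], blast)
  with op show ?thesis
    unfolding cp_adm_def by (intro exI[of _ k] exI[of _ "\<lambda>x. f (h1 x) (h2 x)"] exI[of _ c]) simp
qed

lemma cp_adm_mult:
  assumes U: "open {t. U t}"
  shows "cp_adm B U F1 \<Longrightarrow> cp_adm B U F2 \<Longrightarrow> cp_adm B U (\<lambda>\<phi> t. F1 \<phi> t * F2 \<phi> t)"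
  by (rule cp_adm_binop[OF U _ _ smooth_on_mult[OF open_Collect_coord[OF U]]])

lemma cp_adm_diff:
  assumes U: "open {t. U t}"
  shows "cp_adm B U F1 \<Longrightarrow> cp_adm B U F2 \<Longrightarrow> cp_adm B U (\<lambda>\<phi> t. F1 \<phi> t - F2 \<phi> t)"
  by (rule cp_adm_binop[OF U _ _ smooth_on_diff[OF open_Collect_coord[OF U]]])

lemma cp_adm_scale: "open {t. U t} \<Longrightarrow> cp_adm B U F \<Longrightarrow> cp_adm B U (\<lambda>\<phi> t. c * F \<phi> t)"
  by (rule cp_adm_mult[OF _ cp_adm_const])

lemma cp_adm_sub_point:
  assumes "b \<in> B"
  shows "cp_adm B (\<lambda>_. True) (\<lambda>\<phi> t. t - \<phi> b)"
proof -
  have "smooth_on (Suc 1) (\<lambda>_. True) (\<lambda>x. x 1 - x 0)"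
    by (intro smooth_on_diff smooth_on_proj) auto
  then show ?thesis
    unfolding cp_adm_def using assms
    by (intro exI[of _ 1] exI[of _ "\<lambda>x. x 1 - x 0"] exI[of _ "\<lambda>_. b"]) simp
qed

lemma cp_adm_inverse: "cp_adm B (\<lambda>t. t \<noteq> 0) (\<lambda>\<phi> t. inverse t)"
proof -
  have "smooth_on (Suc 0) (\<lambda>x. x 0 \<noteq> 0) (\<lambda>x. inverse (x 0))"
    by (rule smooth_on_comp1[OF _ smooth1_on_inverse smooth_on_proj])
       (auto intro: open_Collect_coord[OF open_Collect_nonzero])
  then show ?thesis
    unfolding cp_adm_def by (intro exI[of _ 0] exI[of _ "\<lambda>x. inverse (x 0)"]) simp
qed

lemma cp_adm_inverse_cutoff_denom:
  assumes "b \<in> B"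
  shows "cp_adm B (\<lambda>_. True) (\<lambda>\<phi> t. inverse (cutoff_denom (t * \<phi> b)))"
proof -
  have "smooth_on (Suc 1) (\<lambda>_. True) (\<lambda>x. inverse (cutoff_denom (x 1 * x 0)))"
    by (intro smooth_on_inverse_cutoff_denom_comp smooth_on_mult smooth_on_proj) auto
  then show ?thesis
    unfolding cp_adm_def using assms
    by (intro exI[of _ 1] exI[of _ "\<lambda>x. inverse (cutoff_denom (x 1 * x 0))"] exI[of _ "\<lambda>_. b"]) simp
qed

lemma cp_adm_inverse_subst:
  assumes "cp_adm B (\<lambda>_. True) H"
  shows "cp_adm B (\<lambda>s. s \<noteq> 0) (\<lambda>\<phi> s. H \<phi> (inverse s))"
proof -
  obtain k h c where "\<forall>i<k. c i \<in> B" and h: "smooth_on (Suc k) (\<lambda>_. True) h"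
    and H: "\<And>\<phi> t. H \<phi> t = h (\<lambda>i. if i < k then \<phi> (c i) else t)"
    using assms unfolding cp_adm_def by auto
  have "smooth_on (Suc k) (\<lambda>x. x k \<noteq> 0) (\<lambda>x. h (x(k := inverse (x k))))"
    by (rule smooth_on_subst_coord[OF _ smooth1_on_inverse h])
       (auto intro: open_Collect_coord[OF open_Collect_nonzero])
  moreover have "H \<phi> (inverse s) = h ((\<lambda>i. if i < k then \<phi> (c i) else s)(k := inverse s))" for \<phi> s
    unfolding H by (rule depends_belowD[OF smooth_on_depends_below[OF h]]) simp
  ultimately show ?thesis
    unfolding cp_adm_def using \<open>\<forall>i<k. c i \<in> B\<close>
    by (intro exI[of _ k] exI[of _ "\<lambda>x. h (x(k := inverse (x k)))"] exI[of _ c]) simp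
qed

lemma cp_adm_cutoff_point:
  assumes "b \<in> B" and "cp_adm B (\<lambda>s. s \<noteq> 0) F"
  shows "cp_adm B (\<lambda>_. True) (\<lambda>\<phi> t. cutoff (t * \<phi> b) * F \<phi> (\<phi> b))"
proof -
  obtain k h c where c: "\<forall>i<k. c i \<in> B" and h: "smooth_on (Suc k) (\<lambda>x. x k \<noteq> 0) h"
    and F: "\<And>\<phi> t. t \<noteq> 0 \<Longrightarrow> F \<phi> t = h (\<lambda>i. if i < k then \<phi> (c i) else t)"
    using assms(2) unfolding cp_adm_def by auto
  define h' where "h' = (\<lambda>x::nat \<Rightarrow> real. cutoff (x (Suc k) * x k) * h x)"
  have U1: "open {x::nat \<Rightarrow> real. x k \<noteq> 0}"
    by (rule open_Collect_coord[OF open_Collect_nonzero])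
  have U2: "open {x::nat \<Rightarrow> real. x (Suc k) * x k < 1/2}"
    by (intro open_Collect_less continuous_on_mult continuous_on_const)
       (auto intro: continuous_on_product_coordinates)
  have h': "smooth_on (Suc (Suc k)) (\<lambda>x. x k \<noteq> 0) h'"
    unfolding h'_def
    by (intro smooth_on_mult[OF U1] smooth_on_cutoff_comp[OF U1] smooth_on_proj[OF U1]
        smooth_on_mono_arity[OF U1 h]) auto
  have "smooth_on (Suc (Suc k)) (\<lambda>x. x k \<noteq> 0 \<or> x (Suc k) * x k < 1/2) h'"
    by (rule smooth_on_glue[OF U1 U2 h' smooth_on_const[OF U2, of _ 0] _ _
          smooth_on_depends_below[OF h']])
       (auto simp: h'_def cutoff_eq_0)
  moreover have "(\<lambda>x::nat \<Rightarrow> real. x k \<noteq> 0 \<or> x (Suc k) * x k < 1/2) = (\<lambda>_. True)"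
    by auto
  moreover have "cutoff (t * \<phi> b) * F \<phi> (\<phi> b) = h' (\<lambda>i. if i < Suc k then \<phi> ((c(k := b)) i) else t)"
    for \<phi> t
  proof (cases "\<phi> b = 0")
    case False
    have "h (\<lambda>i. if i < k then \<phi> (c i) else \<phi> b) = h (\<lambda>i. if i < Suc k then \<phi> ((c(k := b)) i) else t)"
      by (rule depends_belowD[OF smooth_on_depends_below[OF h]]) auto
    with False show ?thesis
      by (simp add: h'_def F)
  qed (simp add: h'_def cutoff_eq_0)
  moreover have "\<forall>i<Suc k. (c(k := b)) i \<in> B"
    using c \<open>b \<in> B\<close> by simp
  ultimately show ?thesis
    unfolding cp_adm_def by (intro exI[of _ "Suc k"] exI[of _ h'] exI[of _ "c(k := b)"]) simp
qed

section \<open>The ideal generated by the kernel \<open>J\<close>\<close>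

definition cp_zero :: "'b set \<Rightarrow> 'b cops \<Rightarrow> (real \<Rightarrow> bool) \<Rightarrow> (('b \<Rightarrow> real) \<Rightarrow> real \<Rightarrow> real) \<Rightarrow> bool" where
  "cp_zero B \<Psi> U E \<longleftrightarrow> cp_eq B \<Psi> U E (\<lambda>_ _. 0)"

lemma cp_eq_iff_cp_zero: "cp_eq B \<Psi> U F F' \<longleftrightarrow> cp_zero B \<Psi> U (\<lambda>\<phi> t. F \<phi> t - F' \<phi> t)"
  by (simp add: cp_zero_def cp_eq_def)

lemma cp_zero_cong:
  assumes "cp_zero B \<Psi> U E" and "\<And>\<phi> t. U t \<Longrightarrow> E \<phi> t = E' \<phi> t"
  shows "cp_zero B \<Psi> U E'"
proof -
  obtain N q G where "\<forall>l<(N::nat). cp_adm B U (q l) \<and> cp_ker B \<Psi> (G l)"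
    and "\<And>\<phi> t. U t \<Longrightarrow> E \<phi> t - 0 = (\<Sum>l<N. q l \<phi> t * G l \<phi>)"
    using assms(1) unfolding cp_zero_def cp_eq_def by blast
  with assms(2) show ?thesis
    unfolding cp_zero_def cp_eq_def by (intro exI[of _ N] exI[of _ q] exI[of _ G]) simp
qed

lemma cp_zero_ker: "open {t. U t} \<Longrightarrow> cp_ker B \<Psi> G \<Longrightarrow> cp_zero B \<Psi> U (\<lambda>\<phi> t. G \<phi>)"
  unfolding cp_zero_def cp_eq_def
  by (intro exI[of _ 1] exI[of _ "\<lambda>_ _ _. 1"] exI[of _ "\<lambda>_. G"]) (simp add: cp_adm_const)

lemma cp_zero_mult:
  assumes U: "open {t. U t}" and P: "cp_adm B U P" and "cp_zero B \<Psi> U E"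
  shows "cp_zero B \<Psi> U (\<lambda>\<phi> t. P \<phi> t * E \<phi> t)"
proof -
  obtain N q G where qG: "\<forall>l<(N::nat). cp_adm B U (q l) \<and> cp_ker B \<Psi> (G l)"
    and E: "\<And>\<phi> t. U t \<Longrightarrow> E \<phi> t - 0 = (\<Sum>l<N. q l \<phi> t * G l \<phi>)"
    using \<open>cp_zero B \<Psi> U E\<close> unfolding cp_zero_def cp_eq_def by blast
  show ?thesis
    unfolding cp_zero_def cp_eq_def
  proof (intro exI[of _ N] exI[of _ "\<lambda>l \<phi> t. P \<phi> t * q l \<phi> t"] exI[of _ G] conjI allI impI)
    show "cp_adm B U (\<lambda>\<phi> t. P \<phi> t * q l \<phi> t)" "cp_ker B \<Psi> (G l)" if "l < N" for l
      using qG that by (simp_all add: cp_adm_mult[OF U P])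
    show "P \<phi> t * E \<phi> t - 0 = (\<Sum>l<N. P \<phi> t * q l \<phi> t * G l \<phi>)" if "U t" for \<phi> t
      using E[OF that] by (simp add: sum_distrib_left mult.assoc)
  qed
qed

lemma sum_lessThan_add: "(\<Sum>l<m + n. f l) = (\<Sum>l<m. f l) + (\<Sum>l<n. f (m + l))"
  for f :: "nat \<Rightarrow> 'a::comm_monoid_add"
  by (induction n) (simp_all add: add.assoc)

lemma cp_zero_add:
  assumes "cp_zero B \<Psi> U E1" and "cp_zero B \<Psi> U E2"
  shows "cp_zero B \<Psi> U (\<lambda>\<phi> t. E1 \<phi> t + E2 \<phi> t)"
proof -
  obtain N1 q1 G1 where qG1: "\<forall>l<(N1::nat). cp_adm B U (q1 l) \<and> cp_ker B \<Psi> (G1 l)"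
    and E1: "\<And>\<phi> t. U t \<Longrightarrow> E1 \<phi> t - 0 = (\<Sum>l<N1. q1 l \<phi> t * G1 l \<phi>)"
    using assms(1) unfolding cp_zero_def cp_eq_def by blast
  obtain N2 q2 G2 where qG2: "\<forall>l<(N2::nat). cp_adm B U (q2 l) \<and> cp_ker B \<Psi> (G2 l)"
    and E2: "\<And>\<phi> t. U t \<Longrightarrow> E2 \<phi> t - 0 = (\<Sum>l<N2. q2 l \<phi> t * G2 l \<phi>)"
    using assms(2) unfolding cp_zero_def cp_eq_def by blast
  define q where "q l = (if l < N1 then q1 l else q2 (l - N1))" for l
  define G where "G l = (if l < N1 then G1 l else G2 (l - N1))" for l
  show ?thesis
    unfolding cp_zero_def cp_eq_def
  proof (intro exI[of _ "N1 + N2"] exI[of _ q] exI[of _ G] conjI allI impI)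
    show "cp_adm B U (q l)" "cp_ker B \<Psi> (G l)" if "l < N1 + N2" for l
      using qG1 qG2 that by (auto simp: q_def G_def)
    show "E1 \<phi> t + E2 \<phi> t - 0 = (\<Sum>l<N1 + N2. q l \<phi> t * G l \<phi>)" if "U t" for \<phi> t
      using E1[OF that] E2[OF that] by (simp add: sum_lessThan_add q_def G_def)
  qed
qed

lemma cp_zero_diff:
  assumes "open {t. U t}" "cp_zero B \<Psi> U E1" "cp_zero B \<Psi> U E2"
  shows "cp_zero B \<Psi> U (\<lambda>\<phi> t. E1 \<phi> t - E2 \<phi> t)"
  using cp_zero_add[OF assms(2) cp_zero_mult[OF assms(1) cp_adm_const[OF assms(1), of B "-1"] assms(3)]]
  by (rule cp_zero_cong) simp

lemma cp_zero_cutoff_point: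
  assumes "b \<in> B" and "cp_zero B \<Psi> (\<lambda>s. s \<noteq> 0) E"
  shows "cp_zero B \<Psi> (\<lambda>_. True) (\<lambda>\<phi> t. cutoff (t * \<phi> b) * E \<phi> (\<phi> b))"
proof -
  obtain N q G where qG: "\<forall>l<(N::nat). cp_adm B (\<lambda>s. s \<noteq> 0) (q l) \<and> cp_ker B \<Psi> (G l)"
    and E: "\<And>\<phi> s. s \<noteq> 0 \<Longrightarrow> E \<phi> s - 0 = (\<Sum>l<N. q l \<phi> s * G l \<phi>)"
    using assms(2) unfolding cp_zero_def cp_eq_def by blast
  show ?thesis
    unfolding cp_zero_def cp_eq_def
  proof (intro exI[of _ N] exI[of _ "\<lambda>l \<phi> t. cutoff (t * \<phi> b) * q l \<phi> (\<phi> b)"] exI[of _ G]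
      conjI allI impI)
    show "cp_adm B (\<lambda>_. True) (\<lambda>\<phi> t. cutoff (t * \<phi> b) * q l \<phi> (\<phi> b))" "cp_ker B \<Psi> (G l)"
      if "l < N" for l
      using qG that by (simp_all add: cp_adm_cutoff_point[OF \<open>b \<in> B\<close>])
    show "cutoff (t * \<phi> b) * E \<phi> (\<phi> b) - 0 = (\<Sum>l<N. cutoff (t * \<phi> b) * q l \<phi> (\<phi> b) * G l \<phi>)"
      for \<phi> t
      using E[of "\<phi> b" \<phi>] by (cases "\<phi> b = 0") (simp_all add: cutoff_eq_0 sum_distrib_left mult.assoc)
  qed
qed

lemma cp_zero_inverse_subst:
  assumes "cp_zero B \<Psi> (\<lambda>_. True) E"
  shows "cp_zero B \<Psi> (\<lambda>s. s \<noteq> 0) (\<lambda>\<phi> s. E \<phi> (inverse s))"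
proof -
  obtain N q G where qG: "\<forall>l<(N::nat). cp_adm B (\<lambda>_. True) (q l) \<and> cp_ker B \<Psi> (G l)"
    and E: "\<And>\<phi> t. E \<phi> t - 0 = (\<Sum>l<N. q l \<phi> t * G l \<phi>)"
    using assms unfolding cp_zero_def cp_eq_def by blast
  show ?thesis
    unfolding cp_zero_def cp_eq_def
    by (intro exI[of _ N] exI[of _ "\<lambda>l \<phi> s. q l \<phi> (inverse s)"] exI[of _ G])
       (use qG E in \<open>simp add: cp_adm_inverse_subst\<close>)
qed

section \<open>Localization and \<open>\<infinity>\<close>-nilpotence\<close>

lemma cp_ker_eval:
  assumes "b \<in> B" and "cp_eval_is B \<Psi> F b (czero \<Psi>)"
  shows "cp_ker B \<Psi> (\<lambda>\<phi>. F \<phi> (\<phi> b))"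
proof -
  obtain k h c where c: "\<forall>i<k. c i \<in> B" and h: "smooth (Suc k) h"
    and F: "\<And>\<phi> t. F \<phi> t = h (\<lambda>i. if i < k then \<phi> (c i) else t)"
    and zero: "\<Psi> (Suc k) h (c(k := b)) = czero \<Psi>"
    using assms(2) unfolding cp_eval_is_def by blast
  have "h (\<lambda>i. if i < k then \<phi> (c i) else \<phi> b) = h (\<lambda>i. \<phi> ((c(k := b)) i))" for \<phi>
    by (rule depends_belowD[OF smooth_on_depends_below[OF h[unfolded smooth_def]]]) auto
  then have "\<forall>\<phi>. F \<phi> (\<phi> b) = h (\<lambda>i. \<phi> ((c(k := b)) i))"
    by (simp add: F)
  moreover have "\<forall>i<Suc k. (c(k := b)) i \<in> B"
    using c \<open>b \<in> B\<close> by simp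
  ultimately show ?thesis
    unfolding cp_ker_def using h zero by blast
qed

lemma loc_trivial_iff_unit:
  "loc_trivial B \<Psi> b \<longleftrightarrow>
    (\<exists>H. cp_adm B (\<lambda>_. True) H \<and> cp_zero B \<Psi> (\<lambda>_. True) (\<lambda>\<phi> t. 1 - H \<phi> t * (t * \<phi> b - 1)))"
proof
  assume "loc_trivial B \<Psi> b"
  moreover have "cp_adm B (\<lambda>_. True) (\<lambda>\<phi> t. 1)" "cp_adm B (\<lambda>_. True) (\<lambda>\<phi> t. 0)"
    by (simp_all add: cp_adm_const)
  ultimately have "loc_eq B \<Psi> b (\<lambda>_ _. 1) (\<lambda>_ _. 0)"
    unfolding loc_trivial_def by blast
  then show "\<exists>H. cp_adm B (\<lambda>_. True) H \<and> cp_zero B \<Psi> (\<lambda>_. True) (\<lambda>\<phi> t. 1 - H \<phi> t * (t * \<phi> b - 1))"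
    unfolding loc_eq_def cp_eq_iff_cp_zero diff_0_right .
next
  assume "\<exists>H. cp_adm B (\<lambda>_. True) H \<and> cp_zero B \<Psi> (\<lambda>_. True) (\<lambda>\<phi> t. 1 - H \<phi> t * (t * \<phi> b - 1))"
  then obtain H where H: "cp_adm B (\<lambda>_. True) H"
    and unit: "cp_zero B \<Psi> (\<lambda>_. True) (\<lambda>\<phi> t. 1 - H \<phi> t * (t * \<phi> b - 1))"
    by blast
  show "loc_trivial B \<Psi> b"
    unfolding loc_trivial_def loc_eq_def cp_eq_iff_cp_zero
  proof (intro allI impI, elim conjE)
    fix F F' assume "cp_adm B (\<lambda>_. True) F" "cp_adm B (\<lambda>_. True) F'"
    then have D: "cp_adm B (\<lambda>_. True) (\<lambda>\<phi> t. F \<phi> t - F' \<phi> t)"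
      by (simp add: cp_adm_diff)
    show "\<exists>H'. cp_adm B (\<lambda>_. True) H' \<and>
        cp_zero B \<Psi> (\<lambda>_. True) (\<lambda>\<phi> t. F \<phi> t - H' \<phi> t * (t * \<phi> b - 1) - F' \<phi> t)"
    proof (intro exI conjI)
      show "cp_adm B (\<lambda>_. True) (\<lambda>\<phi> t. (F \<phi> t - F' \<phi> t) * H \<phi> t)"
        by (simp add: cp_adm_mult[OF _ D H])
      show "cp_zero B \<Psi> (\<lambda>_. True)
          (\<lambda>\<phi> t. F \<phi> t - (F \<phi> t - F' \<phi> t) * H \<phi> t * (t * \<phi> b - 1) - F' \<phi> t)"
        by (rule cp_zero_cong[OF cp_zero_mult[OF _ D unit]]) (simp, simp add: algebra_simps)
    qed
  qed
qed

lemma inf_nilpotent_imp_unit: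
  assumes "b \<in> B" and "inf_nilpotent B \<Psi> b"
  shows "\<exists>H. cp_adm B (\<lambda>_. True) H \<and> cp_zero B \<Psi> (\<lambda>_. True) (\<lambda>\<phi> t. 1 - H \<phi> t * (t * \<phi> b - 1))"
proof -
  obtain F F' where eval: "cp_eval_is B \<Psi> F b (czero \<Psi>)" and F': "cp_adm B (\<lambda>s. s \<noteq> 0) F'"
    and inv: "cp_zero B \<Psi> (\<lambda>s. s \<noteq> 0) (\<lambda>\<phi> s. F \<phi> s * F' \<phi> s - 1)"
    using assms(2) unfolding inf_nilpotent_def cp_invertible_def cp_eq_iff_cp_zero by blast
  have ker: "cp_zero B \<Psi> (\<lambda>_. True) (\<lambda>\<phi> t. (cutoff (t * \<phi> b) * F' \<phi> (\<phi> b)) * F \<phi> (\<phi> b))"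
    by (rule cp_zero_mult[OF _ cp_adm_cutoff_point[OF \<open>b \<in> B\<close> F']
          cp_zero_ker[OF _ cp_ker_eval[OF \<open>b \<in> B\<close> eval]]]) simp_all
  have cut: "cp_zero B \<Psi> (\<lambda>_. True) (\<lambda>\<phi> t. cutoff (t * \<phi> b) * (F \<phi> (\<phi> b) * F' \<phi> (\<phi> b) - 1))"
    by (rule cp_zero_cutoff_point[OF \<open>b \<in> B\<close> inv])
  have "cp_zero B \<Psi> (\<lambda>_. True) (\<lambda>\<phi> t. cutoff (t * \<phi> b))"
    by (rule cp_zero_cong[OF cp_zero_diff[OF _ ker cut]]) (simp_all add: algebra_simps)
  then have "cp_zero B \<Psi> (\<lambda>_. True)
      (\<lambda>\<phi> t. 1 - - inverse (cutoff_denom (t * \<phi> b)) * (t * \<phi> b - 1))"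
    by (rule cp_zero_cong) (simp add: cutoff_eq algebra_simps)
  moreover have "cp_adm B (\<lambda>_. True) (\<lambda>\<phi> t. - inverse (cutoff_denom (t * \<phi> b)))"
    using cp_adm_scale[OF _ cp_adm_inverse_cutoff_denom[OF \<open>b \<in> B\<close>], of "-1"] by simp
  ultimately show ?thesis
    by blast
qed

lemma unit_imp_inf_nilpotent:
  assumes "b \<in> B" and diag: "\<Psi> (Suc 1) (\<lambda>x. x 1 - x 0) (\<lambda>_. b) = czero \<Psi>"
    and H: "cp_adm B (\<lambda>_. True) H" and unit: "cp_zero B \<Psi> (\<lambda>_. True) (\<lambda>\<phi> t. 1 - H \<phi> t * (t * \<phi> b - 1))"
  shows "inf_nilpotent B \<Psi> b"
proof -
  have "smooth (Suc 1) (\<lambda>x. x 1 - x 0)"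
    unfolding smooth_def by (intro smooth_on_diff smooth_on_proj) auto
  then have eval: "cp_eval_is B \<Psi> (\<lambda>\<phi> s. s - \<phi> b) b (czero \<Psi>)"
    unfolding cp_eval_is_def using \<open>b \<in> B\<close> diag
    by (intro exI[of _ 1] exI[of _ "\<lambda>x. x 1 - x 0"] exI[of _ "\<lambda>_. b"]) (simp add: fun_upd_idem)
  define F' where "F' = (\<lambda>\<phi> s. - (H \<phi> (inverse s) * inverse s))"
  have "cp_adm B (\<lambda>s. s \<noteq> 0) F'"
    unfolding F'_def
    using cp_adm_scale[OF open_Collect_nonzero cp_adm_mult[OF open_Collect_nonzero cp_adm_inverse_subst[OF H] cp_adm_inverse], of "-1"] by simp
  moreover have "cp_zero B \<Psi> (\<lambda>s. s \<noteq> 0) (\<lambda>\<phi> s. (s - \<phi> b) * F' \<phi> s - 1)"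
    using cp_zero_mult[OF open_Collect_nonzero cp_adm_const[OF open_Collect_nonzero] cp_zero_inverse_subst[OF unit], of "-1"]
    by (rule cp_zero_cong) (simp add: F'_def field_simps)
  ultimately show ?thesis
    unfolding inf_nilpotent_def cp_invertible_def cp_eq_iff_cp_zero
    using cp_adm_sub_point[OF \<open>b \<in> B\<close>] eval by blast
qed

lemma loc_trivial_iff_inf_nilpotent:
  assumes "b \<in> B" and "\<Psi> (Suc 1) (\<lambda>x. x 1 - x 0) (\<lambda>_. b) = czero \<Psi>"
  shows "loc_trivial B \<Psi> b \<longleftrightarrow> inf_nilpotent B \<Psi> b"
proof
  assume "loc_trivial B \<Psi> b"
  then obtain H where "cp_adm B (\<lambda>_. True) H"
    and "cp_zero B \<Psi> (\<lambda>_. True) (\<lambda>\<phi> t. 1 - H \<phi> t * (t * \<phi> b - 1))"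
    unfolding loc_trivial_iff_unit by blast
  then show "inf_nilpotent B \<Psi> b"
    by (rule unit_imp_inf_nilpotent[OF assms])
next
  assume "inf_nilpotent B \<Psi> b"
  then show "loc_trivial B \<Psi> b"
    unfolding loc_trivial_iff_unit by (rule inf_nilpotent_imp_unit[OF assms(1)])
qed

section \<open>Quotients\<close>

lemma
  assumes "cinf_ring A \<Phi>"
  shows cinf_ring_args_cong: "(\<forall>i<n. a i = b i) \<Longrightarrow> \<Phi> n f a = \<Phi> n f b"
    and cinf_ring_proj: "i < n \<Longrightarrow> (\<forall>j<n. a j \<in> A) \<Longrightarrow> \<Phi> n (\<lambda>x. x i) a = a i"
    and cinf_ring_comp: "smooth m f \<Longrightarrow> (\<forall>j<m. smooth n (g j)) \<Longrightarrow> (\<forall>i<n. a i \<in> A) \<Longrightarrow>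
      \<Phi> n (\<lambda>x. f (\<lambda>j. g j x)) a = \<Phi> m f (\<lambda>j. \<Phi> n (g j) a)"
  using assms unfolding cinf_ring_def by simp_all

lemma cinf_ring_diag_zero:
  assumes R: "cinf_ring A \<Phi>" and "a \<in> A" and f: "smooth (Suc 1) f" and f0: "\<And>t. f (\<lambda>_. t) = 0"
  shows "\<Phi> (Suc 1) f (\<lambda>_. a) = czero \<Phi>"
proof -
  have "smooth 1 (\<lambda>x. x 0)" "smooth 0 (\<lambda>_. 0)"
    unfolding smooth_def by (simp_all add: smooth_on_proj smooth_on_const)
  have "\<Phi> (Suc 1) f (\<lambda>_. a) = \<Phi> (Suc 1) f (\<lambda>j. \<Phi> 1 (\<lambda>x. x 0) (\<lambda>_. a))"
    using cinf_ring_proj[OF R, of 0 1 "\<lambda>_. a"] \<open>a \<in> A\<close> by simp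
  also have "\<dots> = \<Phi> 1 (\<lambda>x. f (\<lambda>j. x 0)) (\<lambda>_. a)"
    using cinf_ring_comp[OF R f, of 1 "\<lambda>_ x. x 0" "\<lambda>_. a"] \<open>smooth 1 (\<lambda>x. x 0)\<close> \<open>a \<in> A\<close> by simp
  also have "\<dots> = \<Phi> 1 (\<lambda>x. 0) (\<lambda>_. a)"
    by (simp add: f0)
  also have "\<dots> = \<Phi> 0 (\<lambda>_. 0) (\<lambda>j. \<Phi> 1 (\<lambda>x. 0) (\<lambda>_. a))"
    using cinf_ring_comp[OF R \<open>smooth 0 (\<lambda>_. 0)\<close>, of 1 "\<lambda>_ x. 0" "\<lambda>_. a"] \<open>a \<in> A\<close> by simp
  also have "\<dots> = czero \<Phi>"
    unfolding czero_def by (rule cinf_ring_args_cong[OF R]) simp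
  finally show ?thesis .
qed

lemma qops_diag:
  assumes R: "cinf_ring A \<Phi>" and I: "cinf_ideal A \<Phi> I" and "g \<in> A"
  shows "qops A \<Phi> I (Suc 1) (\<lambda>x. x 1 - x 0) (\<lambda>_. qcls A \<Phi> I g) = czero (qops A \<Phi> I)"
proof -
  have diff_smooth: "smooth (Suc 1) (\<lambda>x. x 0 - x 1)" "smooth (Suc 1) (\<lambda>x. x 1 - x 0)"
    unfolding smooth_def by (simp_all add: smooth_on_diff smooth_on_proj)
  have "csub \<Phi> g g = \<Phi> (Suc 1) (\<lambda>x. x 0 - x 1) (\<lambda>_. g)"
    unfolding csub_def pair2_def by (simp add: numeral_2_eq_2)
  also have "\<dots> = czero \<Phi>"
    by (rule cinf_ring_diag_zero[OF R \<open>g \<in> A\<close> diff_smooth(1)]) simp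
  finally have "g \<in> qcls A \<Phi> I g"
    using I \<open>g \<in> A\<close> unfolding cinf_ideal_def qcls_def by simp
  \<comment> \<open>\<open>qops\<close> evaluates on chosen representatives; both arguments are the same class and
    so get the same representative \<open>a\<close>.\<close>
  define a where "a = (SOME a. a \<in> qcls A \<Phi> I g)"
  have "a \<in> A"
    using someI[of "\<lambda>a. a \<in> qcls A \<Phi> I g", OF \<open>g \<in> qcls A \<Phi> I g\<close>] unfolding a_def qcls_def by simp
  have "qops A \<Phi> I (Suc 1) (\<lambda>x. x 1 - x 0) (\<lambda>_. qcls A \<Phi> I g) =
      qcls A \<Phi> I (\<Phi> (Suc 1) (\<lambda>x. x 1 - x 0) (\<lambda>_. a))"
    unfolding qops_def a_def ..
  also have "\<dots> = qcls A \<Phi> I (czero \<Phi>)"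
    by (subst cinf_ring_diag_zero[OF R \<open>a \<in> A\<close> diff_smooth(2)]) simp_all
  also have "\<dots> = czero (qops A \<Phi> I)"
    unfolding czero_def qops_def by (subst cinf_ring_args_cong[OF R, of 0]) simp_all
  finally show ?thesis .
qed

theorem proposition2p5:
  fixes A :: "'a set" and \<Phi> :: "'a cops" and I :: "'a set" and g :: 'a
  assumes "cinf_ring A \<Phi>" and "cinf_ideal A \<Phi> I" and "g \<in> A"
  shows "g \<in> inf_radical A \<Phi> I \<longleftrightarrow>
         inf_nilpotent (qcarrier A \<Phi> I) (qops A \<Phi> I) (qcls A \<Phi> I g)"
proof -
  have "qcls A \<Phi> I g \<in> qcarrier A \<Phi> I"
    unfolding qcarrier_def using \<open>g \<in> A\<close> by simp
  then have "loc_trivial (qcarrier A \<Phi> I) (qops A \<Phi> I) (qcls A \<Phi> I g) \<longleftrightarrow>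
      inf_nilpotent (qcarrier A \<Phi> I) (qops A \<Phi> I) (qcls A \<Phi> I g)"
    by (rule loc_trivial_iff_inf_nilpotent[OF _ qops_diag[OF assms]])
  then show ?thesis
    unfolding inf_radical_def using \<open>g \<in> A\<close> by simp
qed

end
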